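(* Let $(A(n))_{n\ge1}$ be an i.i.d. sequence of random $(\max,+)$ operators on $\mathbb R^d$ with the memory loss property, such that $\|A(1)0\|_\infty$ has a finite $(4+\epsilon)$-th moment for some $\epsilon>0$, and let $X^0\in L^\infty$ be independent of $(A(n))$. If $(A(n))$ is algebraically arithmetic, then there exist $a,b\in\mathbb R$ such that $$\{\rho_{\max}(B): B\in S_A,\ \mathcal G(B)\text{ strongly connected}\}\subset a+b\mathbb Z.$$
   Context: $\mathbb R_{\max}=\mathbb R\cup\{-\infty\}$. A $d\times d$ matrix $A$ over $\mathbb R_{\max}$ with no row identically $-\infty$ defines a $(\max,+)$ operator on $\mathbb R^d$ by $(Ax)_i=\max_j(A_{ij}+x_j)$; composition is the $(\max,+)$ product $(AB)_{ij}=\max_p(A_{ip}+B_{pj})$. Such operators are topical (isotone and $A(x+a\mathbf 1)=Ax+a\mathbf 1$, $\mathbf 1=(1,\dots,1)'$); $Top_d$ is the set of all topical operators on $\mathbb R^d$. Let $\bar x$ be the class of $x$ modulo $\mathbb R\mathbf 1$. A topical operator $A$ has rank 1 if $\overline{Ax}$ does not depend on $x$; the sequence has the memory loss property if some $A(N)\cdots A(1)$ has rank 1 with positive probability. $A(1)0$ is the image of the zero vector. $S_A$ is the support of the law of $A(1)$ and $T_A$ the semigroup it generates. The sequence is algebraically arithmetic if there are $a,b\in\mathbb R$ and $\theta\in Top_d$ of rank 1 such that for all $A\in S_A$ and all $\theta'\in T_A$ of rank 1, $(\theta A\theta'-\theta\theta')(\mathbb R^d)\subset(a+b\mathbb Z)\mathbf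 1$. The graph $\mathcal G(B)$ has nodes $1,\dots,d$ and arcs $(i,j)$ with weight $B_{ij}$ whenever $B_{ij}>-\infty$; it is strongly connected if every node can be reached from every other. $\rho_{\max}(B)$ is the maximum over elementary circuits $(i_1,\dots,i_n,i_1)$ of $\mathcal G(B)$ of the average weight $\frac1n\sum_{j=1}^nB_{i_ji_{j+1}}$. *)

theory Defs
  imports "HOL-Probability.Probability"
begin

text \<open>Matrices over R_max = R \<union> {-\<infinity>}, indexed by a finite type 'd of size d.\<close>

type_synonym 'd mpmat = "'d \<Rightarrow> 'd \<Rightarrow> ereal"

definition mp_matrix :: "('d::finite) mpmat \<Rightarrow> bool" where
  "mp_matrix B \<longleftrightarrow> (\<forall>i j. B i j \<noteq> \<infinity>) \<and> (\<forall>i. \<exists>j. B i j \<noteq> -\<infinity>)"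

definition mp_op :: "('d::finite) mpmat \<Rightarrow> ('d \<Rightarrow> real) \<Rightarrow> ('d \<Rightarrow> real)" where
  "mp_op B x = (\<lambda>i. real_of_ereal (Max (range (\<lambda>j. B i j + ereal (x j)))))"

definition topical :: "(('d::finite \<Rightarrow> real) \<Rightarrow> ('d \<Rightarrow> real)) \<Rightarrow> bool" where
  "topical f \<longleftrightarrow> mono f \<and> (\<forall>x a. f (\<lambda>i. x i + a) = (\<lambda>i. f x i + a))"

definition rank_one :: "(('d::finite \<Rightarrow> real) \<Rightarrow> ('d \<Rightarrow> real)) \<Rightarrow> bool" where
  "rank_one f \<longleftrightarrow> (\<forall>x y. \<exists>c. f x = (\<lambda>i. f y i + c))"

fun iter_op :: "(nat \<Rightarrow> 'a \<Rightarrow> ('d::finite) mpmat) \<Rightarrow> nat \<Rightarrow> 'a \<Rightarrow> ('d \<Rightarrow> real) \<Rightarrow> ('d \<Rightarrow> real)" where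
  "iter_op A 0 \<omega> = id"
| "iter_op A (Suc n) \<omega> = mp_op (A (Suc n) \<omega>) \<circ> iter_op A n \<omega>"

definition mp_support :: "'a measure \<Rightarrow> ('a \<Rightarrow> ('d::finite) mpmat) \<Rightarrow> 'd mpmat set" where
  "mp_support M X = {B. mp_matrix B \<and>
      (\<forall>U. open U \<longrightarrow> B \<in> U \<longrightarrow> measure M {\<omega> \<in> space M. X \<omega> \<in> U} > 0)}"

inductive_set gen_semigroup :: "('d::finite) mpmat set \<Rightarrow> (('d \<Rightarrow> real) \<Rightarrow> ('d \<Rightarrow> real)) set"
  for S where
  base: "B \<in> S \<Longrightarrow> mp_op B \<in> gen_semigroup S"
| step: "f \<in> gen_semigroup S \<Longrightarrow> B \<in> S \<Longrightarrow> mp_op B \<circ> f \<in> gen_semigroup S"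

definition alg_arithmetic :: "('d::finite) mpmat set \<Rightarrow> bool" where
  "alg_arithmetic S \<longleftrightarrow> (\<exists>(a::real) (b::real) \<theta>. topical \<theta> \<and> rank_one \<theta> \<and>
     (\<forall>B\<in>S. \<forall>\<theta>'\<in>gen_semigroup S. rank_one \<theta>' \<longrightarrow>
        (\<forall>x. \<exists>k::int. \<forall>i. \<theta> (mp_op B (\<theta>' x)) i - \<theta> (\<theta>' x) i = a + b * of_int k)))"

definition strongly_connected :: "('d::finite) mpmat \<Rightarrow> bool" where
  "strongly_connected B \<longleftrightarrow> (\<forall>i j. (i, j) \<in> {(p, q). B p q \<noteq> -\<infinity>}\<^sup>*)"

definition elem_circuits :: "('d::finite) mpmat \<Rightarrow> 'd list set" where
  "elem_circuits B = {c. c \<noteq> [] \<and> distinct c \<and>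
      (\<forall>k < length c. B (c ! k) (c ! ((k + 1) mod length c)) \<noteq> -\<infinity>)}"

definition circuit_mean :: "('d::finite) mpmat \<Rightarrow> 'd list \<Rightarrow> real" where
  "circuit_mean B c = (\<Sum>k<length c. real_of_ereal (B (c ! k) (c ! ((k + 1) mod length c)))) / real (length c)"

definition rho_max :: "('d::finite) mpmat \<Rightarrow> real" where
  "rho_max B = Max (circuit_mean B ` elem_circuits B)"

definition sup_norm :: "('d::finite \<Rightarrow> real) \<Rightarrow> real" where
  "sup_norm x = Max (range (\<lambda>i. \<bar>x i\<bar>))"

end

theory Submission
  imports Defs
begin

text \<open>For a strongly connected \<open>B\<close> in the support \<open>S\<^sub>A\<close>, \<open>\<rho> = \<rho>\<^sub>m\<^sub>a\<^sub>x(B)\<close> governs the orbits of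
  \<open>B\<close>: with \<open>L = d!\<close>, \<open>(B\<^sup>n v)\<^sub>j \<le> n \<rho> + C\<close> for all \<open>n\<close> (cut walks into elementary circuits), and
  \<open>B\<^sup>n\<^sup>+\<^sup>L v \<ge> B\<^sup>n v + L \<rho>\<close> for large \<open>n\<close>, because every long optimal walk meets a critical circuit,
  whose length divides \<open>L\<close>. Memory loss yields a rank-one \<open>\<theta>\<^sub>0 \<in> T\<^sub>A\<close> (a product of positive
  probability all of whose factors lie in \<open>S\<^sub>A\<close>), so the \<open>B\<^sup>n \<circ> \<theta>\<^sub>0\<close> are rank-one elements of
  \<open>T\<^sub>A\<close> and algebraic arithmeticity puts the increments of \<open>u\<^sub>n = \<theta>(B\<^sup>n \<theta>\<^sub>0 0)\<^sub>i\<close> in \<open>a + b\<int>\<close>.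
  Hence \<open>u\<^sub>n\<^sub>+\<^sub>L - u\<^sub>n - L \<rho>\<close> is eventually nonnegative, lies in \<open>L (a - \<rho>) + b\<int>\<close> and has bounded
  partial sums, so by discreteness \<open>0 \<in> L (a - \<rho>) + b\<int>\<close>, i.e. \<open>\<rho> \<in> a + (b / L)\<int>\<close>.\<close>

section \<open>Walks and elementary circuits\<close>

fun walk_weight :: "'d mpmat \<Rightarrow> 'd list \<Rightarrow> real" where
  "walk_weight B (i # j # w) = real_of_ereal (B i j) + walk_weight B (j # w)"
| "walk_weight B _ = 0"

fun mp_walk :: "'d mpmat \<Rightarrow> 'd list \<Rightarrow> bool" where
  "mp_walk B (i # j # w) \<longleftrightarrow> B i j \<noteq> -\<infinity> \<and> mp_walk B (j # w)"
| "mp_walk B _ \<longleftrightarrow> True"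

lemma walk_weight_append:
  "walk_weight B (xs @ y # ys) = walk_weight B (xs @ [y]) + walk_weight B (y # ys)"
proof (induction xs)
  case (Cons x xs) then show ?case by (cases xs) auto
qed simp

lemma mp_walk_append: "mp_walk B (xs @ y # ys) \<longleftrightarrow> mp_walk B (xs @ [y]) \<and> mp_walk B (y # ys)"
proof (induction xs)
  case (Cons x xs) then show ?case by (cases xs) auto
qed simp

lemma walk_weight_cut_closed_subwalk:
  "walk_weight B (as @ y # bs @ y # cs) = walk_weight B (y # bs @ [y]) + walk_weight B (as @ y # cs)"
  using walk_weight_append[of B as y "bs @ y # cs"] walk_weight_append[of B "y # bs" y cs]
    walk_weight_append[of B as y cs] by simp

lemma mp_walk_cut_closed_subwalk:
  "mp_walk B (as @ y # bs @ y # cs) \<Longrightarrow> mp_walk B (y # bs @ [y]) \<and> mp_walk B (as @ y # cs)"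
  using mp_walk_append[of B as y "bs @ y # cs"] mp_walk_append[of B "y # bs" y cs]
    mp_walk_append[of B as y cs] by simp

lemma walk_weight_conv_sum:
  "walk_weight B w = (\<Sum>k < length w - 1. real_of_ereal (B (w ! k) (w ! Suc k)))"
proof (induction B w rule: walk_weight.induct)
  case (1 B x y r)
  then show ?case by (simp add: sum.lessThan_Suc_shift del: sum.lessThan_Suc)
qed auto

lemma mp_walk_conv_nth: "mp_walk B w \<longleftrightarrow> (\<forall>k < length w - 1. B (w ! k) (w ! Suc k) \<noteq> -\<infinity>)"
  by (induction B w rule: mp_walk.induct) (auto simp: less_Suc_eq_0_disj)

lemma nth_close_circuit:
  assumes "k < length c"
  shows "(c @ [hd c]) ! k = c ! k" and "(c @ [hd c]) ! Suc k = c ! ((k + 1) mod length c)"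
proof -
  show "(c @ [hd c]) ! k = c ! k" using assms by (simp add: nth_append)
  show "(c @ [hd c]) ! Suc k = c ! ((k + 1) mod length c)"
  proof (cases "Suc k < length c")
    case False
    then have "Suc k = length c" "c \<noteq> []" using assms by auto
    then show ?thesis by (simp add: nth_append hd_conv_nth)
  qed (simp add: nth_append)
qed

lemma elem_circuits_iff:
  "c \<in> elem_circuits B \<longleftrightarrow> c \<noteq> [] \<and> distinct c \<and> mp_walk B (c @ [hd c])"
  unfolding elem_circuits_def mp_walk_conv_nth by (auto simp: nth_close_circuit)

lemma circuit_mean_eq:
  "c \<noteq> [] \<Longrightarrow> circuit_mean B c = walk_weight B (c @ [hd c]) / real (length c)"
  unfolding circuit_mean_def walk_weight_conv_sum by (simp add: nth_close_circuit)

lemma distinct_length_le_card: "distinct (xs :: ('d::finite) list) \<Longrightarrow> length xs \<le> CARD('d)"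
  using card_mono[OF finite subset_UNIV, of "set xs"] by (simp add: distinct_card)

lemma finite_elem_circuits: "finite (elem_circuits (B :: ('d::finite) mpmat))"
proof (rule finite_subset)
  show "elem_circuits B \<subseteq> {xs. set xs \<subseteq> UNIV \<and> length xs \<le> CARD('d)}"
    unfolding elem_circuits_def using distinct_length_le_card by blast
qed (rule finite_lists_length_le, simp)

lemma circuit_mean_le_rho_max: "c \<in> elem_circuits B \<Longrightarrow> circuit_mean B c \<le> rho_max B"
  unfolding rho_max_def by (rule Max_ge) (use finite_elem_circuits in auto)

section \<open>Max-plus operators\<close>

lemma mp_op_ge_entry:
  assumes "mp_matrix B" "B i k \<noteq> -\<infinity>"
  shows "real_of_ereal (B i k) + y k \<le> mp_op B y i"
proof -
  let ?S = "range (\<lambda>j. B i j + ereal (y j))"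
  have "B i k + ereal (y k) \<le> Max ?S" by (rule Max_ge) auto
  moreover have "Max ?S \<in> ?S" by (rule Max_in) auto
  then obtain j where "Max ?S = B i j + ereal (y j)" by blast
  moreover have "B i j \<noteq> \<infinity>" "B i k \<noteq> \<infinity>" using assms(1) unfolding mp_matrix_def by auto
  ultimately show ?thesis using assms(2) unfolding mp_op_def
    by (cases "B i k"; cases "B i j") auto
qed

lemma mp_op_attained:
  assumes "mp_matrix B"
  obtains k where "B i k \<noteq> -\<infinity>" "mp_op B y i = real_of_ereal (B i k) + y k"
proof -
  let ?S = "range (\<lambda>j. B i j + ereal (y j))"
  obtain k0 where k0: "B i k0 \<noteq> -\<infinity>" using assms unfolding mp_matrix_def by blast
  have "B i k0 + ereal (y k0) \<le> Max ?S" by (rule Max_ge) auto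
  moreover have "Max ?S \<in> ?S" by (rule Max_in) auto
  then obtain j where "Max ?S = B i j + ereal (y j)" by blast
  moreover have "B i j \<noteq> \<infinity>" "B i k0 \<noteq> \<infinity>" using assms unfolding mp_matrix_def by auto
  ultimately show ?thesis using k0 that[of j] unfolding mp_op_def
    by (cases "B i k0"; cases "B i j") auto
qed

lemma topical_mp_op:
  assumes B: "mp_matrix B"
  shows "topical (mp_op B)"
  unfolding topical_def
proof safe
  show "mono (mp_op B)"
  proof (rule monoI, rule le_funI)
    fix y z :: "'a \<Rightarrow> real" and i assume "y \<le> z"
    obtain k where "B i k \<noteq> -\<infinity>" "mp_op B y i = real_of_ereal (B i k) + y k"
      using mp_op_attained[OF B] .
    with mp_op_ge_entry[OF B, of i k z] le_funD[OF \<open>y \<le> z\<close>, of k]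
    show "mp_op B y i \<le> mp_op B z i" by linarith
  qed
next
  fix y :: "'a \<Rightarrow> real" and c
  show "mp_op B (\<lambda>j. y j + c) = (\<lambda>i. mp_op B y i + c)"
  proof
    fix i
    obtain k where "B i k \<noteq> -\<infinity>" "mp_op B y i = real_of_ereal (B i k) + y k"
      using mp_op_attained[OF B] .
    moreover obtain k' where "B i k' \<noteq> -\<infinity>"
      "mp_op B (\<lambda>j. y j + c) i = real_of_ereal (B i k') + (y k' + c)"
      using mp_op_attained[OF B] .
    ultimately show "mp_op B (\<lambda>j. y j + c) i = mp_op B y i + c"
      using mp_op_ge_entry[OF B, of i k' y] mp_op_ge_entry[OF B, of i k "\<lambda>j. y j + c"] by linarith
  qed
qed

lemma topical_le: "topical f \<Longrightarrow> (\<And>j. x j \<le> y j) \<Longrightarrow> f x i \<le> f y i"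
  unfolding topical_def mono_def by (simp add: le_fun_def)

lemma topical_add_const: "topical f \<Longrightarrow> f (\<lambda>j. x j + c) i = f x i + c"
  unfolding topical_def by metis

lemma topical_comp: "topical f \<Longrightarrow> topical g \<Longrightarrow> topical (f \<circ> g)"
  unfolding topical_def by (simp add: mono_def)

lemma topical_funpow: "topical f \<Longrightarrow> topical (f ^^ n)"
proof (induction n)
  case 0 then show ?case by (simp add: topical_def mono_def)
next
  case (Suc n) then show ?case using topical_comp by (metis funpow.simps(2))
qed

lemma rank_one_topical_comp: "topical g \<Longrightarrow> rank_one f \<Longrightarrow> rank_one (g \<circ> f)"
  unfolding rank_one_def by (metis comp_apply topical_def)

lemma walk_weight_le_mp_pow:
  assumes B: "mp_matrix B"
  shows "mp_walk B w \<Longrightarrow> w \<noteq> [] \<Longrightarrow>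
    walk_weight B w + y (last w) \<le> (mp_op B ^^ (length w - 1)) y (hd w)"
proof (induction w rule: induct_list012)
  case (3 i j w)
  have "walk_weight B (i # j # w) + y (last (i # j # w))
      = real_of_ereal (B i j) + (walk_weight B (j # w) + y (last (j # w)))" by simp
  also have "\<dots> \<le> real_of_ereal (B i j) + (mp_op B ^^ length w) y j"
    using "3.IH"(2) "3.prems"(1) by simp
  also have "\<dots> \<le> mp_op B ((mp_op B ^^ length w) y) i"
    using mp_op_ge_entry[OF B] "3.prems"(1) by simp
  finally show ?case by simp
qed auto

lemma mp_pow_eq_walk_weight:
  assumes B: "mp_matrix B"
  obtains w where "mp_walk B w" "length w = Suc n" "hd w = i"
    "(mp_op B ^^ n) y i = walk_weight B w + y (last w)"
proof (induction n arbitrary: i thesis)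
  case 0 show ?case by (rule "0.prems"[of "[i]"]) simp_all
next
  case (Suc n)
  obtain k where k: "B i k \<noteq> -\<infinity>"
    "mp_op B ((mp_op B ^^ n) y) i = real_of_ereal (B i k) + (mp_op B ^^ n) y k"
    using mp_op_attained[OF B] .
  obtain w where w: "mp_walk B w" "length w = Suc n" "hd w = k"
    "(mp_op B ^^ n) y k = walk_weight B w + y (last w)"
    using Suc.IH .
  then obtain r where "w = k # r" by (cases w) auto
  with k w show ?case by (intro Suc.prems[of "i # w"]) auto
qed

section \<open>Weights of walks\<close>

definition max_abs_entry :: "('d::finite) mpmat \<Rightarrow> real" where
  "max_abs_entry B = Max (range (\<lambda>(i, j). \<bar>real_of_ereal (B i j)\<bar>))"

lemma abs_entry_le_max_abs_entry: "\<bar>real_of_ereal (B i j)\<bar> \<le> max_abs_entry B"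
  unfolding max_abs_entry_def by (rule Max_ge) auto

lemma max_abs_entry_nonneg: "0 \<le> max_abs_entry B"
  using abs_entry_le_max_abs_entry abs_ge_zero order_trans by blast

lemma walk_weight_le_max_abs_entry: "walk_weight B w \<le> real (length w - 1) * max_abs_entry B"
proof (induction w rule: induct_list012)
  case (3 i j w)
  then show ?case
    using abs_le_D1[OF abs_entry_le_max_abs_entry[of B i j]] by (simp add: algebra_simps)
qed auto

lemma split_closed_walk:
  assumes "\<not> distinct (x # ys)"
  obtains y bs zs where
    "walk_weight B (x # ys @ [x]) = walk_weight B (y # bs @ [y]) + walk_weight B (x # zs @ [x])"
    "mp_walk B (x # ys @ [x]) \<Longrightarrow> mp_walk B (y # bs @ [y]) \<and> mp_walk B (x # zs @ [x])"
    "length ys + 1 = (length bs + 1) + (length zs + 1)"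
    "set (y # bs) \<subseteq> set (x # ys)" "set (x # zs) \<subseteq> set (x # ys)"
proof -
  obtain as y bs cs where dec: "x # ys = as @ [y] @ bs @ [y] @ cs"
    using not_distinct_decomp[OF assms] by blast
  then have W: "x # ys @ [x] = as @ y # bs @ y # cs @ [x]" by simp
  obtain zs where zs: "as @ y # cs = x # zs" "length zs = length as + length cs"
  proof (cases as)
    case Nil
    then show ?thesis using dec that[of cs] by simp
  next
    case (Cons a as')
    then show ?thesis using dec that[of "as' @ y # cs"] by simp
  qed
  show ?thesis
  proof (rule that)
    have W': "as @ y # cs @ [x] = x # zs @ [x]" using zs(1) by (metis append.assoc append_Cons)
    show "walk_weight B (x # ys @ [x])
        = walk_weight B (y # bs @ [y]) + walk_weight B (x # zs @ [x])"
      unfolding W W'[symmetric] by (rule walk_weight_cut_closed_subwalk)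
    show "mp_walk B (y # bs @ [y]) \<and> mp_walk B (x # zs @ [x])" if "mp_walk B (x # ys @ [x])"
      using mp_walk_cut_closed_subwalk[of B as y bs "cs @ [x]"] that unfolding W W'[symmetric] .
    show "length ys + 1 = (length bs + 1) + (length zs + 1)"
      using arg_cong[OF dec, of length] zs(2) by simp
    show "set (y # bs) \<subseteq> set (x # ys)" unfolding dec by auto
    show "set (x # zs) \<subseteq> set (x # ys)" unfolding dec zs(1)[symmetric] by auto
  qed
qed

lemma closed_walk_weight_le:
  assumes circ: "\<And>c. c \<in> elem_circuits B \<Longrightarrow> set c \<subseteq> V \<Longrightarrow> circuit_mean B c \<le> r - \<delta>"
    and \<delta>: "0 \<le> \<delta>"
  shows "mp_walk B (x # ys @ [x]) \<Longrightarrow> set (x # ys) \<subseteq> V \<Longrightarrow>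
    walk_weight B (x # ys @ [x]) \<le> r * real (length ys + 1) - \<delta>"
proof (induction "length ys" arbitrary: x ys rule: less_induct)
  case less
  show ?case
  proof (cases "distinct (x # ys)")
    case True
    then have "x # ys \<in> elem_circuits B" using less.prems(1) by (simp add: elem_circuits_iff)
    from circ[OF this less.prems(2)]
    have "walk_weight B (x # ys @ [x]) / real (length ys + 1) \<le> r - \<delta>"
      using circuit_mean_eq[of "x # ys" B] by simp
    then have "walk_weight B (x # ys @ [x]) \<le> (r - \<delta>) * real (length ys + 1)"
      by (simp add: divide_le_eq)
    also have "\<dots> \<le> r * real (length ys + 1) - \<delta>" using \<delta> by (simp add: algebra_simps)
    finally show ?thesis .
  next
    case False
    obtain y bs zs where weight:
      "walk_weight B (x # ys @ [x]) = walk_weight B (y # bs @ [y]) + walk_weight B (x # zs @ [x])"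
      and walks: "mp_walk B (x # ys @ [x]) \<Longrightarrow> mp_walk B (y # bs @ [y]) \<and> mp_walk B (x # zs @ [x])"
      and len: "length ys + 1 = (length bs + 1) + (length zs + 1)"
      and sets: "set (y # bs) \<subseteq> set (x # ys)" "set (x # zs) \<subseteq> set (x # ys)"
      using split_closed_walk[OF False, of B] by blast
    have "set (y # bs) \<subseteq> V" "set (x # zs) \<subseteq> V" using sets less.prems(2) by auto
    then have "walk_weight B (y # bs @ [y]) \<le> r * real (length bs + 1) - \<delta>"
      and "walk_weight B (x # zs @ [x]) \<le> r * real (length zs + 1) - \<delta>"
      using less.hyps[of bs y] less.hyps[of zs x] len walks[OF less.prems(1)] by simp_all
    then show ?thesis using weight len \<delta> by (simp add: algebra_simps)
  qed
qed

lemma mult_div_le_self: "0 \<le> \<delta> \<Longrightarrow> real m \<le> D \<Longrightarrow> 0 < D \<Longrightarrow> \<delta> * real m / D \<le> \<delta>"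
  by (simp add: divide_le_eq mult_left_mono)

lemma short_walk_weight_le:
  fixes B :: "('d::finite) mpmat"
  assumes short: "length w - 1 < CARD('d)" and \<delta>: "0 \<le> \<delta>"
  shows "walk_weight B w \<le> r * real (length w - 1) + real CARD('d) * (max_abs_entry B + \<bar>r\<bar>) + \<delta>
    - \<delta> * real (length w - 1) / real CARD('d)"
proof -
  define D where "D = real CARD('d)"
  define M where "M = max_abs_entry B"
  define n where "n = length w - 1"
  have "walk_weight B w \<le> real n * M"
    using walk_weight_le_max_abs_entry unfolding M_def n_def .
  moreover have "real n * M = r * real n + real n * (M - r)" by (simp add: algebra_simps)
  moreover have "real n * (M - r) \<le> real n * (M + \<bar>r\<bar>)" by (rule mult_left_mono) auto
  moreover have "real n * (M + \<bar>r\<bar>) \<le> D * (M + \<bar>r\<bar>)"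
    using short max_abs_entry_nonneg[of B] unfolding D_def M_def n_def by (intro mult_right_mono) auto
  moreover have "\<delta> * real n / D \<le> \<delta>"
    using short \<delta> unfolding D_def n_def by (intro mult_div_le_self) auto
  ultimately show ?thesis unfolding D_def M_def n_def by argo
qed

text \<open>Closed subwalks of length at most \<open>d\<close> are cut out of the walk until fewer than \<open>d\<close>
  steps remain; each one removed has weight at most \<open>r m - \<delta>\<close> and \<open>m \<le> d\<close> steps.\<close>

lemma walk_weight_le:
  fixes B :: "('d::finite) mpmat"
  assumes circ: "\<And>c. c \<in> elem_circuits B \<Longrightarrow> set c \<subseteq> V \<Longrightarrow> circuit_mean B c \<le> r - \<delta>"
    and \<delta>: "0 \<le> \<delta>"
  shows "mp_walk B w \<Longrightarrow> w \<noteq> [] \<Longrightarrow> set w \<subseteq> V \<Longrightarrow>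
    walk_weight B w \<le> r * real (length w - 1) + real CARD('d) * (max_abs_entry B + \<bar>r\<bar>) + \<delta>
      - \<delta> * real (length w - 1) / real CARD('d)"
proof (induction "length w" arbitrary: w rule: less_induct)
  case less
  show ?case
  proof (cases "length w - 1 < CARD('d)")
    case True
    then show ?thesis using short_walk_weight_le \<delta> by blast
  next
    case False
    define D where "D = real CARD('d)"
    define M where "M = max_abs_entry B"
    let ?p = "take (Suc CARD('d)) w"
    define q where "q = drop (Suc CARD('d)) w"
    have "length ?p = Suc CARD('d)" using False less.prems(2) by (cases w) auto
    then have "\<not> distinct ?p" using distinct_length_le_card[of ?p] by auto
    then obtain as y bs cs where dec: "?p = as @ [y] @ bs @ [y] @ cs"
      using not_distinct_decomp by blast
    have W: "w = as @ y # (bs @ y # (cs @ q))"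
      using dec append_take_drop_id[of "Suc CARD('d)" w] unfolding q_def by simp
    define w' where "w' = as @ y # (cs @ q)"
    define m where "m = length bs + 1"
    have weight: "walk_weight B w = walk_weight B (y # bs @ [y]) + walk_weight B w'"
      unfolding W w'_def by (rule walk_weight_cut_closed_subwalk)
    have walks: "mp_walk B (y # bs @ [y])" "mp_walk B w'"
      using mp_walk_cut_closed_subwalk[of B as y bs "cs @ q"] less.prems(1)
      unfolding W w'_def by simp_all
    have "length ?p = length as + length bs + length cs + 2" using dec by simp
    then have m: "real m \<le> D" using \<open>length ?p = Suc CARD('d)\<close> unfolding m_def D_def by simp
    have n: "length w - 1 = (length w' - 1) + m" unfolding m_def w'_def W by simp
    have sets: "set (y # bs) \<subseteq> V" "set w' \<subseteq> V" using less.prems(3) unfolding W w'_def by auto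
    have "walk_weight B w' \<le> r * real (length w' - 1) + D * (M + \<bar>r\<bar>) + \<delta>
        - \<delta> * real (length w' - 1) / D"
      using less.hyps[of w'] walks sets unfolding D_def M_def W w'_def by simp
    moreover have "walk_weight B (y # bs @ [y]) \<le> r * real m - \<delta>"
      using closed_walk_weight_le[OF circ \<delta>] walks sets unfolding m_def by simp
    moreover have "\<delta> * real m / D \<le> \<delta>" using mult_div_le_self[OF \<delta> m] unfolding D_def by simp
    ultimately show ?thesis
      unfolding weight n D_def[symmetric] M_def[symmetric] by (simp add: add_divide_distrib algebra_simps)
  qed
qed

section \<open>Critical nodes and the growth of orbits\<close>

lemma abs_le_sup_norm: "\<bar>x i\<bar> \<le> sup_norm x"
  unfolding sup_norm_def by (rule Max_ge) auto

text \<open>Without elementary circuits every closed walk would have weight at most \<open>r m\<close> for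
  every \<open>r\<close>; but a walk with \<open>d + 1\<close> nodes contains a closed one.\<close>

lemma elem_circuits_nonempty:
  fixes B :: "('d::finite) mpmat"
  assumes B: "mp_matrix B"
  shows "elem_circuits B \<noteq> {}"
proof
  assume none: "elem_circuits B = {}"
  obtain w where w: "mp_walk B w" "length w = Suc CARD('d)"
    using mp_pow_eq_walk_weight[OF B, of "CARD('d)" undefined "\<lambda>_. 0"] by metis
  then have "\<not> distinct w" using distinct_length_le_card[of w] by auto
  then obtain as y bs cs where dec: "w = as @ [y] @ bs @ [y] @ cs" using not_distinct_decomp by blast
  have "mp_walk B (y # bs @ [y])" using w(1) mp_walk_cut_closed_subwalk unfolding dec by fastforce
  moreover define m where "m = real (length bs + 1)"
  ultimately have "walk_weight B (y # bs @ [y]) \<le> ((walk_weight B (y # bs @ [y]) - 1) / m) * m - 0"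
    using none closed_walk_weight_le[where V = UNIV and \<delta> = 0] by blast
  then show False unfolding m_def by simp
qed

definition critical_node :: "('d::finite) mpmat \<Rightarrow> 'd \<Rightarrow> bool" where
  "critical_node B i \<longleftrightarrow> (\<exists>zs. i # zs \<in> elem_circuits B \<and> circuit_mean B (i # zs) = rho_max B)"

lemma critical_node_exists:
  assumes "mp_matrix B"
  obtains i where "critical_node B i"
proof -
  have "rho_max B \<in> circuit_mean B ` elem_circuits B" unfolding rho_max_def
    using finite_elem_circuits elem_circuits_nonempty[OF assms] by (intro Max_in) auto
  then obtain c where "c \<in> elem_circuits B" "circuit_mean B c = rho_max B" by auto
  moreover from this obtain i zs where "c = i # zs" by (cases c) (auto simp: elem_circuits_iff)
  ultimately show ?thesis using that unfolding critical_node_def by blast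
qed

lemma funpow_ge_iterate:
  assumes "\<And>y. real m * r + y i \<le> (f ^^ m) y i"
  shows "real (k * m) * r + y i \<le> (f ^^ (k * m)) y i"
proof (induction k arbitrary: y)
  case (Suc k)
  have "real (Suc k * m) * r + y i = real m * r + (real (k * m) * r + y i)"
    by (simp add: algebra_simps)
  also have "\<dots> \<le> real m * r + (f ^^ (k * m)) y i" using Suc.IH by simp
  also have "\<dots> \<le> (f ^^ m) ((f ^^ (k * m)) y) i" by (rule assms)
  also have "\<dots> = (f ^^ (Suc k * m)) y i" by (simp add: funpow_add)
  finally show ?case .
qed simp

text \<open>The critical circuit through \<open>i\<close> has \<open>m \<le> d\<close> steps, and \<open>m\<close> divides \<open>d!\<close>.\<close>

lemma critical_node_mp_pow_ge:
  fixes B :: "('d::finite) mpmat"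
  assumes B: "mp_matrix B" and i: "critical_node B i"
  shows "real (k * fact CARD('d)) * rho_max B + y i \<le> (mp_op B ^^ (k * fact CARD('d))) y i"
proof -
  obtain zs where c: "i # zs \<in> elem_circuits B" "circuit_mean B (i # zs) = rho_max B"
    using i unfolding critical_node_def by blast
  define m where "m = length zs + 1"
  have "m \<le> CARD('d)" using distinct_length_le_card[of "i # zs"] c(1)
    unfolding m_def elem_circuits_iff by simp
  then have "m dvd fact CARD('d)" unfolding m_def by (intro dvd_fact) auto
  then obtain l where l: "(fact CARD('d) :: nat) = m * l" by (rule dvdE)
  have "real m * rho_max B + y i \<le> (mp_op B ^^ m) y i" for y
    using walk_weight_le_mp_pow[OF B, of "i # zs @ [i]" y] c circuit_mean_eq[of "i # zs" B]
    unfolding m_def elem_circuits_iff by (simp add: field_simps)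
  from funpow_ge_iterate[of m "rho_max B", OF this, of "k * l"] show ?thesis
    unfolding l by (simp add: ac_simps)
qed

lemma mp_pow_le_rho_max:
  fixes B :: "('d::finite) mpmat"
  assumes B: "mp_matrix B"
  obtains C where "\<And>n j. (mp_op B ^^ n) v j \<le> real n * rho_max B + C"
proof -
  define C where "C = real CARD('d) * (max_abs_entry B + \<bar>rho_max B\<bar>) + sup_norm v"
  have "(mp_op B ^^ n) v j \<le> real n * rho_max B + C" for n j
  proof -
    obtain w where w: "mp_walk B w" "length w = Suc n" "hd w = j"
      "(mp_op B ^^ n) v j = walk_weight B w + v (last w)"
      using mp_pow_eq_walk_weight[OF B] .
    have "walk_weight B w \<le> rho_max B * real n + real CARD('d) * (max_abs_entry B + \<bar>rho_max B\<bar>)"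
      using walk_weight_le[where V = UNIV and \<delta> = 0] circuit_mean_le_rho_max w by force
    with w(4) abs_le_sup_norm[of v "last w"] show ?thesis unfolding C_def by (simp add: mult.commute)
  qed
  then show ?thesis by (rule that)
qed

lemma mp_walk_of_rtrancl:
  "(j, i) \<in> {(p, q). B p q \<noteq> -\<infinity>}\<^sup>* \<Longrightarrow> \<exists>p. mp_walk B p \<and> p \<noteq> [] \<and> hd p = j \<and> last p = i"
proof (induction rule: converse_rtrancl_induct)
  case base show ?case by (intro exI[of _ "[i]"]) simp
next
  case (step j k)
  then obtain p where p: "mp_walk B p" "p \<noteq> []" "hd p = k" "last p = i" by blast
  then obtain r where "p = k # r" by (cases p) auto
  then show ?case using p step(1) by (intro exI[of _ "j # p"]) auto
qed

lemma mp_pow_ge_via_walk: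
  fixes B :: "('d::finite) mpmat"
  assumes B: "mp_matrix B" and i: "critical_node B i"
    and p: "mp_walk B p" "p \<noteq> []" "last p = i"
  shows "\<exists>K. \<forall>n \<ge> length p - 1. real n * rho_max B - K \<le> (mp_op B ^^ n) v (hd p)"
proof -
  define L where "L = (fact CARD('d) :: nat)"
  define \<rho> where "\<rho> = rho_max B"
  define P where "P = length p - 1"
  define K' where "K' = Max ((\<lambda>(s, k). \<bar>(mp_op B ^^ s) v k\<bar>) ` ({..<L} \<times> UNIV))"
  have K': "- K' \<le> (mp_op B ^^ s) v k" if "s < L" for s k
  proof -
    have "\<bar>(mp_op B ^^ s) v k\<bar> \<le> K'" unfolding K'_def by (rule Max_ge) (use that in auto)
    then show ?thesis by linarith
  qed
  have "real n * \<rho> - (\<bar>walk_weight B p\<bar> + real (P + L) * \<bar>\<rho>\<bar> + K') \<le> (mp_op B ^^ n) v (hd p)"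
    if "P \<le> n" for n
  proof -
    define q where "q = (n - P) div L"
    define s where "s = (n - P) mod L"
    have n: "n = P + (q * L + s)" using that unfolding q_def s_def by simp
    have s: "s < L" unfolding s_def L_def by simp
    define u where "u = (mp_op B ^^ (q * L)) ((mp_op B ^^ s) v)"
    have "real n * \<rho> = real (q * L) * \<rho> + real (P + s) * \<rho>"
      unfolding n by (simp add: algebra_simps)
    moreover have "real (P + s) * \<rho> \<le> real (P + L) * \<bar>\<rho>\<bar>"
      using s by (intro order_trans[OF mult_left_mono[OF abs_ge_self] mult_right_mono]) auto
    moreover have "real (q * L) * \<rho> \<le> u i + K'"
      using critical_node_mp_pow_ge[OF B i, of q "(mp_op B ^^ s) v"] K'[OF s, of i]
      unfolding L_def \<rho>_def u_def by linarith
    moreover have "walk_weight B p + u i \<le> (mp_op B ^^ P) u (hd p)"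
      using walk_weight_le_mp_pow[OF B p(1,2), of u] p(3) unfolding P_def by simp
    moreover have "(mp_op B ^^ P) u (hd p) = (mp_op B ^^ n) v (hd p)"
      unfolding n u_def by (simp add: funpow_add)
    ultimately show ?thesis by linarith
  qed
  then show ?thesis unfolding P_def \<rho>_def by blast
qed

lemma mp_pow_ge_rho_max:
  fixes B :: "('d::finite) mpmat"
  assumes B: "mp_matrix B" and sc: "strongly_connected B"
  obtains N K where "\<And>n j. N \<le> n \<Longrightarrow> real n * rho_max B - K \<le> (mp_op B ^^ n) v j"
proof -
  obtain i where i: "critical_node B i" using critical_node_exists[OF B] .
  have "\<forall>j. \<exists>N K. \<forall>n \<ge> N. real n * rho_max B - K \<le> (mp_op B ^^ n) v j"
  proof
    fix j
    have "(j, i) \<in> {(p, q). B p q \<noteq> -\<infinity>}\<^sup>*" using sc unfolding strongly_connected_def by simp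
    from mp_walk_of_rtrancl[OF this]
    obtain p where "mp_walk B p" "p \<noteq> []" "hd p = j" "last p = i" by blast
    then show "\<exists>N K. \<forall>n \<ge> N. real n * rho_max B - K \<le> (mp_op B ^^ n) v j"
      using mp_pow_ge_via_walk[OF B i] by blast
  qed
  from choice[OF this] obtain N
    where "\<forall>j. \<exists>K. \<forall>n \<ge> N j. real n * rho_max B - K \<le> (mp_op B ^^ n) v j" ..
  from choice[OF this] obtain K
    where NK: "\<forall>j. \<forall>n \<ge> N j. real n * rho_max B - K j \<le> (mp_op B ^^ n) v j" ..
  show ?thesis
  proof (rule that[of "Max (range N)" "Max (range K)"])
    fix n j assume "Max (range N) \<le> n"
    moreover have "N j \<le> Max (range N)" "K j \<le> Max (range K)" by (auto intro: Max_ge)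
    ultimately show "real n * rho_max B - Max (range K) \<le> (mp_op B ^^ n) v j"
      using NK[rule_format, of j n] by linarith
  qed
qed

lemma noncritical_circuit_gap:
  obtains \<delta> where "\<delta> > 0" and "\<And>c. c \<in> elem_circuits B \<Longrightarrow> set c \<subseteq> {i. \<not> critical_node B i} \<Longrightarrow>
    circuit_mean B c \<le> rho_max B - \<delta>"
proof
  define G where "G = (\<lambda>c. rho_max B - circuit_mean B c)
    ` {c \<in> elem_circuits B. set c \<subseteq> {i. \<not> critical_node B i}}"
  have "finite G" unfolding G_def using finite_elem_circuits[of B] by simp
  have G: "g > 0" if g: "g \<in> G" for g
  proof -
    obtain c where c: "c \<in> elem_circuits B" "set c \<subseteq> {i. \<not> critical_node B i}"
      "g = rho_max B - circuit_mean B c"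
      using g unfolding G_def by blast
    then obtain i zs where "c = i # zs" by (cases c) (auto simp: elem_circuits_iff)
    with c have "circuit_mean B c \<noteq> rho_max B" unfolding critical_node_def by auto
    with c circuit_mean_le_rho_max show "g > 0" by fastforce
  qed
  show "Min (insert 1 G) > 0" using \<open>finite G\<close> G by (subst Min_gr_iff) auto
  fix c assume "c \<in> elem_circuits B" "set c \<subseteq> {i. \<not> critical_node B i}"
  then have "rho_max B - circuit_mean B c \<in> G" unfolding G_def by blast
  then have "Min (insert 1 G) \<le> rho_max B - circuit_mean B c" using \<open>finite G\<close> by simp
  then show "circuit_mean B c \<le> rho_max B - Min (insert 1 G)" by simp
qed

text \<open>A walk avoiding critical nodes falls behind \<open>n \<rho>\<^sub>m\<^sub>a\<^sub>x(B)\<close> at a linear rate, while optimal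
  walks stay within a constant of it.\<close>

lemma long_optimal_walk_meets_critical_node:
  fixes B :: "('d::finite) mpmat"
  assumes B: "mp_matrix B" and sc: "strongly_connected B"
  obtains N where "\<And>n w. N \<le> n \<Longrightarrow> mp_walk B w \<Longrightarrow> length w = Suc n \<Longrightarrow>
    (mp_op B ^^ n) v (hd w) = walk_weight B w + v (last w) \<Longrightarrow> \<exists>i \<in> set w. critical_node B i"
proof -
  define \<rho> where "\<rho> = rho_max B"
  define D where "D = real CARD('d)"
  obtain N0 K where low: "\<And>n j. N0 \<le> n \<Longrightarrow> real n * \<rho> - K \<le> (mp_op B ^^ n) v j"
    using mp_pow_ge_rho_max[OF B sc] unfolding \<rho>_def by blast
  obtain \<delta> where \<delta>: "\<delta> > 0" and gap: "\<And>c. c \<in> elem_circuits B \<Longrightarrow>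
      set c \<subseteq> {i. \<not> critical_node B i} \<Longrightarrow> circuit_mean B c \<le> \<rho> - \<delta>"
    using noncritical_circuit_gap unfolding \<rho>_def by blast
  define X where "X = D * (max_abs_entry B + \<bar>\<rho>\<bar>) + \<delta> + K + sup_norm v"
  obtain N1 :: nat where N1: "D * X / \<delta> < real N1" using reals_Archimedean2 by blast
  show ?thesis
  proof (rule that[of "max N0 N1"])
    fix n w assume n: "max N0 N1 \<le> n" and w: "mp_walk B w" "length w = Suc n"
      and opt: "(mp_op B ^^ n) v (hd w) = walk_weight B w + v (last w)"
    show "\<exists>i \<in> set w. critical_node B i"
    proof (rule ccontr)
      assume "\<not> ?thesis"
      then have "set w \<subseteq> {i. \<not> critical_node B i}" by auto
      moreover have "w \<noteq> []" using w(2) by auto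
      ultimately have "walk_weight B w \<le> \<rho> * real n + D * (max_abs_entry B + \<bar>\<rho>\<bar>) + \<delta> - \<delta> * real n / D"
        using walk_weight_le[OF gap less_imp_le[OF \<delta>] w(1)] w(2) unfolding D_def by simp
      moreover have "real n * \<rho> - K \<le> walk_weight B w + v (last w)"
        using low[of n "hd w"] n opt by simp
      moreover have "v (last w) \<le> sup_norm v" using abs_le_sup_norm[of v] abs_le_D1 by blast
      ultimately have "\<delta> * real n / D \<le> X" unfolding X_def by (simp add: mult.commute)
      moreover have "D * X / \<delta> < real n" using N1 n by linarith
      then have "X < \<delta> * real n / D" using \<delta> by (simp add: D_def field_simps)
      ultimately show False by linarith
    qed
  qed
qed

text \<open>The optimal walk for \<open>B\<^sup>n v\<close> passes through a critical node \<open>c\<close>; inserting \<open>d!/m\<close> turns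
  around the critical circuit of length \<open>m\<close> at \<open>c\<close> gives a walk for \<open>B\<^sup>n\<^sup>+\<^sup>d\<^sup>! v\<close>.\<close>

lemma mp_pow_period_ge:
  fixes B :: "('d::finite) mpmat"
  assumes B: "mp_matrix B" and sc: "strongly_connected B"
  obtains N where "\<And>n j. N \<le> n \<Longrightarrow>
    (mp_op B ^^ n) v j + real (fact CARD('d)) * rho_max B \<le> (mp_op B ^^ (n + fact CARD('d))) v j"
proof -
  let ?L = "fact CARD('d) :: nat"
  obtain N where N: "\<And>n w. N \<le> n \<Longrightarrow> mp_walk B w \<Longrightarrow> length w = Suc n \<Longrightarrow>
      (mp_op B ^^ n) v (hd w) = walk_weight B w + v (last w) \<Longrightarrow> \<exists>i \<in> set w. critical_node B i"
    using long_optimal_walk_meets_critical_node[OF B sc] by blast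
  show ?thesis
  proof (rule that[of N])
    fix n j assume n: "N \<le> n"
    obtain w where w: "mp_walk B w" "length w = Suc n" "hd w = j"
      "(mp_op B ^^ n) v j = walk_weight B w + v (last w)"
      using mp_pow_eq_walk_weight[OF B] .
    then obtain c where c: "c \<in> set w" "critical_node B c" using N[OF n] by blast
    obtain xs ys where split: "w = xs @ c # ys" using split_list[OF c(1)] by blast
    have walks: "mp_walk B (xs @ [c])" "mp_walk B (c # ys)"
      using w(1) mp_walk_append[of B xs c ys] unfolding split by simp_all
    have "hd (xs @ [c]) = j" using w(3) unfolding split by (cases xs) auto
    define z where "z = (mp_op B ^^ length ys) v"
    have "n + ?L = length xs + (?L + length ys)" using w(2) unfolding split by simp
    then have "(mp_op B ^^ (n + ?L)) v j = (mp_op B ^^ length xs) ((mp_op B ^^ ?L) z) j"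
      unfolding z_def by (simp only: funpow_add comp_apply)
    moreover have "walk_weight B (xs @ [c]) + (mp_op B ^^ ?L) z c
        \<le> (mp_op B ^^ length xs) ((mp_op B ^^ ?L) z) j"
      using walk_weight_le_mp_pow[OF B walks(1)] \<open>hd (xs @ [c]) = j\<close> by simp
    moreover have "real ?L * rho_max B + z c \<le> (mp_op B ^^ ?L) z c"
      using critical_node_mp_pow_ge[OF B c(2), of 1] by simp
    moreover have "walk_weight B (c # ys) + v (last w) \<le> z c"
      using walk_weight_le_mp_pow[OF B walks(2)] unfolding split z_def by simp
    ultimately show "(mp_op B ^^ n) v j + real ?L * rho_max B \<le> (mp_op B ^^ (n + ?L)) v j"
      using w(4) walk_weight_append[of B xs c ys] unfolding split by linarith
  qed
qed

section \<open>An arithmetic constraint on the growth rate\<close>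

lemma coset_nonneg_min_pos:
  fixes c b :: real
  assumes b: "b > 0" and nz: "\<And>k::int. c + b * of_int k \<noteq> 0"
  obtains s where "s > 0" "\<And>k::int. 0 \<le> c + b * of_int k \<Longrightarrow> s \<le> c + b * of_int k"
proof
  define k0 where "k0 = \<lceil>- c / b\<rceil>"
  have le: "k0 \<le> k \<longleftrightarrow> 0 \<le> c + b * of_int k" for k
  proof -
    have "k0 \<le> k \<longleftrightarrow> - c / b \<le> of_int k" unfolding k0_def by (rule ceiling_le_iff)
    also have "\<dots> \<longleftrightarrow> - c \<le> of_int k * b" by (rule pos_divide_le_eq[OF b])
    finally show ?thesis by (auto simp: mult.commute)
  qed
  then show "c + b * of_int k0 > 0" using nz[of k0] by force
  fix k :: int assume "0 \<le> c + b * of_int k"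
  then show "c + b * of_int k0 \<le> c + b * of_int k" using le b by simp
qed

lemma coset_nonneg_min:
  fixes c b :: real
  assumes nz: "\<And>k::int. c + b * of_int k \<noteq> 0"
  obtains s where "s > 0" "\<And>k::int. 0 \<le> c + b * of_int k \<Longrightarrow> s \<le> c + b * of_int k"
proof (cases b "0 :: real" rule: linorder_cases)
  case less
  have "c + (- b) * of_int k \<noteq> 0" for k :: int using nz[of "- k"] by simp
  with less obtain s where s: "s > 0"
    "\<And>k::int. 0 \<le> c + (- b) * of_int k \<Longrightarrow> s \<le> c + (- b) * of_int k"
    using coset_nonneg_min_pos[of "- b" c] by auto
  show ?thesis
  proof (rule that[OF s(1)])
    fix k :: int assume "0 \<le> c + b * of_int k"
    then show "s \<le> c + b * of_int k" using s(2)[of "- k"] by simp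
  qed
next
  case equal
  then show ?thesis using that[of "\<bar>c\<bar>"] nz[of 0] by auto
next
  case greater
  then show ?thesis using coset_nonneg_min_pos nz that by blast
qed

text \<open>The increments over a period lie in \<open>L (a - \<rho>) + b\<int>\<close>, are eventually nonnegative and
  cannot accumulate beyond the bound \<open>C\<close>; by discreteness they must eventually vanish.\<close>

lemma growth_rate_in_coset:
  fixes u :: "nat \<Rightarrow> real"
  assumes upper: "\<And>n. u n \<le> real n * \<rho> + C"
    and period: "\<And>n. N \<le> n \<Longrightarrow> u n + real L * \<rho> \<le> u (n + L)"
    and steps: "\<And>n. \<exists>k::int. u (Suc n) - u n = a + b * of_int k"
  shows "\<exists>k::int. real L * \<rho> = real L * a + b * of_int k"
proof (rule ccontr)
  assume none: "\<not> ?thesis"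
  have nz: "real L * (a - \<rho>) + b * of_int k \<noteq> 0" for k :: int
  proof
    assume "real L * (a - \<rho>) + b * of_int k = 0"
    then have "real L * \<rho> = real L * a + b * of_int k"
      using right_diff_distrib[of "real L" a \<rho>] by linarith
    with none show False by blast
  qed
  obtain s where s: "s > 0"
    "\<And>k::int. 0 \<le> real L * (a - \<rho>) + b * of_int k \<Longrightarrow> s \<le> real L * (a - \<rho>) + b * of_int k"
    using coset_nonneg_min[OF nz] by blast
  have tele: "\<exists>k::int. u (n + q) - u n = real q * a + b * of_int k" for n q
  proof (induction q)
    case 0 show ?case by (intro exI[of _ 0]) simp
  next
    case (Suc q)
    then obtain k where "u (n + q) - u n = real q * a + b * of_int k" ..
    moreover obtain k' where "u (Suc (n + q)) - u (n + q) = a + b * of_int k'" using steps ..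
    ultimately have "u (n + Suc q) - u n = real (Suc q) * a + b * of_int (k + k')"
      by (simp add: algebra_simps)
    then show ?case ..
  qed
  define g where "g m = u (N + m * L) - real (N + m * L) * \<rho>" for m
  have g_le: "g m \<le> C" for m using upper[of "N + m * L"] unfolding g_def by simp
  have g_step: "g m + s \<le> g (Suc m)" for m
  proof -
    obtain k where k: "u (N + m * L + L) - u (N + m * L) = real L * a + b * of_int k"
      using tele ..
    have "g (Suc m) - g m = real L * (a - \<rho>) + b * of_int k"
      using k unfolding g_def by (simp add: algebra_simps)
    moreover have "0 \<le> g (Suc m) - g m"
      using period[of "N + m * L"] unfolding g_def by (simp add: algebra_simps)
    ultimately show ?thesis using s(2)[of k] by simp
  qed
  have g_ge: "g 0 + real m * s \<le> g m" for m
  proof (induction m)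
    case (Suc m) then show ?case using g_step[of m] by (simp add: algebra_simps)
  qed simp
  obtain m :: nat where "(C - g 0) / s < real m" using reals_Archimedean2 by blast
  then have "C - g 0 < real m * s" using s(1) by (simp add: divide_less_eq)
  then show False using g_ge[of m] g_le[of m] by linarith
qed

lemma rho_max_in_coset:
  fixes B :: "('d::finite) mpmat"
  assumes B: "mp_matrix B" and sc: "strongly_connected B" and \<theta>: "topical \<theta>"
    and steps: "\<And>n. \<exists>k::int. \<theta> ((mp_op B ^^ Suc n) v) i - \<theta> ((mp_op B ^^ n) v) i = a + b * of_int k"
  shows "\<exists>k::int. real (fact CARD('d)) * rho_max B = real (fact CARD('d)) * a + b * of_int k"
proof -
  let ?L = "fact CARD('d) :: nat"
  obtain C where C: "\<And>n j. (mp_op B ^^ n) v j \<le> real n * rho_max B + C"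
    using mp_pow_le_rho_max[OF B, where v = v] by blast
  obtain N where N: "\<And>n j. N \<le> n \<Longrightarrow>
      (mp_op B ^^ n) v j + real ?L * rho_max B \<le> (mp_op B ^^ (n + ?L)) v j"
    using mp_pow_period_ge[OF B sc, where v = v] by blast
  show ?thesis
  proof (rule growth_rate_in_coset[where u = "\<lambda>n. \<theta> ((mp_op B ^^ n) v) i"
        and C = "\<theta> (\<lambda>_. 0) i + C" and N = N])
    fix n
    have "\<theta> ((mp_op B ^^ n) v) i \<le> \<theta> (\<lambda>j. 0 + (real n * rho_max B + C)) i"
      by (rule topical_le[OF \<theta>]) (use C in simp)
    then show "\<theta> ((mp_op B ^^ n) v) i \<le> real n * rho_max B + (\<theta> (\<lambda>_. 0) i + C)"
      using topical_add_const[OF \<theta>, of "\<lambda>_. 0" "real n * rho_max B + C" i] by simp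
  next
    fix n assume "N \<le> n"
    have "\<theta> (\<lambda>j. (mp_op B ^^ n) v j + real ?L * rho_max B) i \<le> \<theta> ((mp_op B ^^ (n + ?L)) v) i"
      by (rule topical_le[OF \<theta>]) (use N \<open>N \<le> n\<close> in simp)
    then show "\<theta> ((mp_op B ^^ n) v) i + real ?L * rho_max B \<le> \<theta> ((mp_op B ^^ (n + ?L)) v) i"
      using topical_add_const[OF \<theta>, of "(mp_op B ^^ n) v" "real ?L * rho_max B" i] by simp
  qed (rule steps)
qed

lemma mp_pow_comp_in_gen_semigroup:
  "f \<in> gen_semigroup S \<Longrightarrow> B \<in> S \<Longrightarrow> (mp_op B ^^ n) \<circ> f \<in> gen_semigroup S"
proof (induction n)
  case (Suc n)
  have "(mp_op B ^^ Suc n) \<circ> f = mp_op B \<circ> ((mp_op B ^^ n) \<circ> f)"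
    by (simp only: funpow.simps(2) comp_assoc)
  then show ?case using gen_semigroup.step[OF Suc.IH[OF Suc.prems] Suc.prems(2)] by (simp only:)
qed simp

lemma alg_arithmetic_rho_max_in_coset:
  fixes S :: "('d::finite) mpmat set"
  assumes arith: "alg_arithmetic S" and valid: "\<And>B. B \<in> S \<Longrightarrow> mp_matrix B"
    and \<theta>\<^sub>0: "\<theta>\<^sub>0 \<in> gen_semigroup S" "rank_one \<theta>\<^sub>0"
  shows "\<exists>a b::real. {rho_max B | B. B \<in> S \<and> strongly_connected B} \<subseteq> {a + b * of_int k | k::int. True}"
proof -
  obtain a b \<theta> where \<theta>: "topical \<theta>" and increments: "\<And>B \<theta>' x. B \<in> S \<Longrightarrow>
      \<theta>' \<in> gen_semigroup S \<Longrightarrow> rank_one \<theta>' \<Longrightarrow>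
      \<exists>k::int. \<forall>i. \<theta> (mp_op B (\<theta>' x)) i - \<theta> (\<theta>' x) i = a + b * of_int k"
    using arith unfolding alg_arithmetic_def by blast
  define L where "L = real (fact CARD('d))"
  show ?thesis
  proof (rule exI[of _ a], rule exI[of _ "b / L"], rule subsetI)
    fix r assume "r \<in> {rho_max B | B. B \<in> S \<and> strongly_connected B}"
    then obtain B where B: "B \<in> S" "strongly_connected B" "r = rho_max B" by blast
    have "rank_one ((mp_op B ^^ n) \<circ> \<theta>\<^sub>0)" for n
      using rank_one_topical_comp[OF topical_funpow[OF topical_mp_op[OF valid[OF B(1)]]] \<theta>\<^sub>0(2)] .
    then have "\<exists>k::int. \<theta> ((mp_op B ^^ Suc n) (\<theta>\<^sub>0 (\<lambda>_. 0))) i - \<theta> ((mp_op B ^^ n) (\<theta>\<^sub>0 (\<lambda>_. 0))) i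
        = a + b * of_int k" for n i
      using increments[OF B(1) mp_pow_comp_in_gen_semigroup[OF \<theta>\<^sub>0(1) B(1)], of n "\<lambda>_. 0"] by auto
    from rho_max_in_coset[OF valid[OF B(1)] B(2) \<theta> this] obtain k :: int
      where "real (fact CARD('d)) * rho_max B = real (fact CARD('d)) * a + b * of_int k" ..
    then have "r = a + b / L * of_int k" unfolding L_def B(3) by (simp add: field_simps)
    then show "r \<in> {a + b / L * of_int k | k::int. True}" by blast
  qed
qed

section \<open>The support and the generated semigroup\<close>

text \<open>Off the support, every point has a basic open neighbourhood of measure zero; a countable
  basis makes the union of these null sets null.\<close>

lemma AE_in_mp_support:
  fixes M :: "'a measure" and X Y :: "'a \<Rightarrow> ('d::finite) mpmat"
  assumes "prob_space M" and X: "X \<in> borel_measurable M" and Y: "Y \<in> borel_measurable M"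
    and valid: "\<And>\<omega>. \<omega> \<in> space M \<Longrightarrow> mp_matrix (X \<omega>)"
    and distr: "distr M borel X = distr M borel Y"
  shows "AE \<omega> in M. X \<omega> \<in> mp_support M Y"
proof -
  interpret prob_space M by fact
  obtain \<B> :: "'d mpmat set set" where \<B>: "countable \<B>" "topological_basis \<B>"
    using ex_countable_basis by blast
  define Z where "Z = {U \<in> \<B>. measure M {\<omega> \<in> space M. Y \<omega> \<in> U} = 0}"
  have null: "X -` U \<inter> space M \<in> null_sets M" if "U \<in> Z" for U
  proof -
    have U: "U \<in> sets borel" using that \<B>(2) unfolding Z_def topological_basis_def by auto
    have "measure M (X -` U \<inter> space M) = measure (distr M borel Y) U"
      using measure_distr[OF X U] distr by simp
    also have "\<dots> = 0"
      using measure_distr[OF Y U] that unfolding Z_def by (simp add: vimage_def Int_def conj_commute)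
    finally show ?thesis using measurable_sets[OF X U] by (simp add: emeasure_eq_measure null_setsI)
  qed
  have "(\<Union>U\<in>Z. X -` U \<inter> space M) \<in> null_sets M"
    using null countable_subset[OF _ \<B>(1), of Z] unfolding Z_def by (intro null_sets_UN') auto
  moreover have "{\<omega> \<in> space M. X \<omega> \<notin> mp_support M Y} \<subseteq> (\<Union>U\<in>Z. X -` U \<inter> space M)"
  proof
    fix \<omega> assume \<omega>: "\<omega> \<in> {\<omega> \<in> space M. X \<omega> \<notin> mp_support M Y}"
    then obtain U where U: "open U" "X \<omega> \<in> U" "\<not> measure M {\<omega>\<in>space M. Y \<omega> \<in> U} > 0"
      using valid unfolding mp_support_def by auto
    obtain U' where U': "U' \<in> \<B>" "X \<omega> \<in> U'" "U' \<subseteq> U"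
      using topological_basisE[OF \<B>(2) U(1,2)] by blast
    have "{\<omega>\<in>space M. Y \<omega> \<in> U} \<in> sets M" using measurable_sets[OF Y borel_open[OF U(1)]]
      by (simp add: vimage_def Int_def conj_commute)
    then have "measure M {\<omega>\<in>space M. Y \<omega> \<in> U'} \<le> measure M {\<omega>\<in>space M. Y \<omega> \<in> U}"
      using U'(3) by (intro finite_measure_mono) auto
    then have "measure M {\<omega>\<in>space M. Y \<omega> \<in> U'} = 0"
      using U(3) measure_nonneg[of M "{\<omega>\<in>space M. Y \<omega> \<in> U'}"] by linarith
    then have "U' \<in> Z" using U'(1) unfolding Z_def by simp
    then show "\<omega> \<in> (\<Union>U\<in>Z. X -` U \<inter> space M)" using U'(2) \<omega> by auto
  qed
  ultimately show ?thesis by (rule AE_I')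
qed

lemma iter_op_in_gen_semigroup:
  "1 \<le> n \<Longrightarrow> (\<And>k. 1 \<le> k \<Longrightarrow> k \<le> n \<Longrightarrow> A k \<omega> \<in> S) \<Longrightarrow> iter_op A n \<omega> \<in> gen_semigroup S"
proof (induction n rule: nat_induct_at_least)
  case base
  then show ?case using gen_semigroup.base[of "A 1 \<omega>" S] by simp
next
  case (Suc n)
  show ?case unfolding iter_op.simps(2) by (rule gen_semigroup.step) (use Suc in auto)
qed

lemma rank_one_in_gen_semigroup:
  fixes M :: "'a measure" and A :: "nat \<Rightarrow> 'a \<Rightarrow> ('d::finite) mpmat"
  assumes "prob_space M"
    and meas: "\<And>n. 1 \<le> n \<Longrightarrow> A n \<in> borel_measurable M"
    and valid: "\<And>n \<omega>. 1 \<le> n \<Longrightarrow> \<omega> \<in> space M \<Longrightarrow> mp_matrix (A n \<omega>)"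
    and ident: "\<And>n. 1 \<le> n \<Longrightarrow> distr M borel (A n) = distr M borel (A 1)"
    and N: "1 \<le> N" "measure M {\<omega> \<in> space M. rank_one (iter_op A N \<omega>)} > 0"
  obtains \<theta> where "\<theta> \<in> gen_semigroup (mp_support M (A 1))" "rank_one \<theta>"
proof -
  define S where "S = mp_support M (A 1)"
  define E where "E = {\<omega> \<in> space M. rank_one (iter_op A N \<omega>)}"
  have "AE \<omega> in M. \<forall>k\<in>{1..N}. A k \<omega> \<in> S"
    unfolding S_def using AE_in_mp_support[OF \<open>prob_space M\<close> meas meas[OF order_refl] valid ident]
    by (intro AE_finite_allI) auto
  then obtain Z where Z: "{\<omega> \<in> space M. \<not> (\<forall>k\<in>{1..N}. A k \<omega> \<in> S)} \<subseteq> Z"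
    "emeasure M Z = 0" "Z \<in> sets M" by (rule AE_E)
  have "\<not> E \<subseteq> Z"
  proof
    assume "E \<subseteq> Z"
    then have "emeasure M E = 0" using Z(2,3) emeasure_mono[of E Z M] by simp
    then show False using N(2) unfolding E_def measure_def by simp
  qed
  then obtain \<omega> where \<omega>: "\<omega> \<in> E" "\<forall>k\<in>{1..N}. A k \<omega> \<in> S" using Z(1) unfolding E_def by blast
  have "iter_op A N \<omega> \<in> gen_semigroup S"
    by (rule iter_op_in_gen_semigroup[OF N(1)]) (use \<omega>(2) in auto)
  moreover have "rank_one (iter_op A N \<omega>)" using \<omega>(1) unfolding E_def by simp
  ultimately show ?thesis using that unfolding S_def by blast
qed

theorem theorem2p10:
  fixes M :: "'a measure"
    and A :: "nat \<Rightarrow> 'a \<Rightarrow> ('d::finite) mpmat"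
    and X0 :: "'a \<Rightarrow> ('d \<Rightarrow> real)"
  assumes "prob_space M"
    and meas: "\<And>n. n \<ge> 1 \<Longrightarrow> A n \<in> borel_measurable M"
    and valid: "\<And>n \<omega>. n \<ge> 1 \<Longrightarrow> \<omega> \<in> space M \<Longrightarrow> mp_matrix (A n \<omega>)"
    and indep: "prob_space.indep_vars M (\<lambda>_. borel) A {1::nat..}"
    and ident: "\<And>n. n \<ge> 1 \<Longrightarrow> distr M borel (A n) = distr M borel (A 1)"
    and memloss: "\<exists>N\<ge>1. measure M {\<omega> \<in> space M. rank_one (iter_op A N \<omega>)} > 0"
    and moment: "\<exists>\<epsilon>>0. integrable M (\<lambda>\<omega>. sup_norm (mp_op (A 1 \<omega>) (\<lambda>_. 0)) powr (4 + \<epsilon>))"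
    and X0_meas: "X0 \<in> borel_measurable M"
    and X0_bdd: "\<exists>C. AE \<omega> in M. \<forall>i. \<bar>X0 \<omega> i\<bar> \<le> C"
    and X0_indep: "prob_space.indep_set M
                     (sets (vimage_algebra (space M) X0 borel))
                     (sets (vimage_algebra (space M) (\<lambda>\<omega>. restrict (\<lambda>n. A n \<omega>) {1::nat..})
                        (PiM {1::nat..} (\<lambda>_. borel))))"
    and arith: "alg_arithmetic (mp_support M (A 1))"
  shows "\<exists>a b::real. {rho_max B | B. B \<in> mp_support M (A 1) \<and> strongly_connected B}
            \<subseteq> {a + b * of_int k | k::int. True}"
proof -
  obtain N where N: "1 \<le> N" "measure M {\<omega> \<in> space M. rank_one (iter_op A N \<omega>)} > 0"
    using memloss by blast
  obtain \<theta>\<^sub>0 where "\<theta>\<^sub>0 \<in> gen_semigroup (mp_support M (A 1))" "rank_one \<theta>\<^sub>0"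
    using rank_one_in_gen_semigroup[where A = A, OF \<open>prob_space M\<close> meas valid ident N] by blast
  moreover have "\<And>B. B \<in> mp_support M (A 1) \<Longrightarrow> mp_matrix B" unfolding mp_support_def by simp
  ultimately show ?thesis using alg_arithmetic_rho_max_in_coset[OF arith] by blast
qed

end
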